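(* Let $S:\mathbb{R}^m\times\mathbb{R}^n\to\mathbb{R}^q$ be a bilinear map with lifted linear operator $\mathscr{S}$, let $\mathcal{K}\subseteq\mathbb{R}^m\times\mathbb{R}^n$, let $\mathcal{K}'=\{xy^T:(x,y)\in\mathcal{K}\}$ and $\mathcal{M}=\mathcal{K}'-\mathcal{K}'=\{X_1-X_2:X_1,X_2\in\mathcal{K}'\}$. Then for every $(x,y)\in\mathcal{K}$, with $z=S(x,y)$, the problem "minimize $\operatorname{rank}(W)$ subject to $\mathscr{S}(W)=z$, $W\in\mathcal{K}'$" has a unique optimal solution (equal to $xy^T$), if and only if $\mathcal{N}(\mathscr{S},2)\cap\mathcal{M}=\{0\}$.
   Context: A map is bilinear if linear in each argument separately. For $j=1,\dots,q$ let $S_j\in\mathbb{R}^{m\times n}$ be the unique matrix with $(S(x,y))_j=x^TS_jy$; the lifted operator $\mathscr{S}:\mathbb{R}^{m\times n}\to\mathbb{R}^q$ is $(\mathscr{S}(W))_j=\operatorname{tr}(S_j^TW)$, so $\mathscr{S}(xy^T)=S(x,y)$. $\mathcal{N}(\mathscr{S},k)=\{X\in\mathbb{R}^{m\times n}:\operatorname{rank}(X)\le k,\ \mathscr{S}(X)=0\}$. The paper phrases the conclusion as "the solution to the rank minimization problem will be correct for every observation $z=S(x,y)$". *)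

theory Defs
  imports "HOL-Analysis.Analysis"
begin

definition outer :: "real^'m \<Rightarrow> real^'n \<Rightarrow> real^'n^'m" where
  "outer x y = (\<chi> i j. x $ i * y $ j)"

text \<open>Lifted linear operator of a bilinear map S: (lift S W)_j = tr(S_j^T W),
  where S_j is the matrix with x^T S_j y = (S x y)_j, i.e. (S_j)_{ik} = (S e_i e_k)_j.\<close>
definition lift_op :: "(real^'m \<Rightarrow> real^'n \<Rightarrow> real^'q) \<Rightarrow> real^'n^'m \<Rightarrow> real^'q" where
  "lift_op S W = (\<chi> j. \<Sum>i\<in>UNIV. \<Sum>k\<in>UNIV. (S (axis i 1) (axis k 1)) $ j * W $ i $ k)"

definition null_rank :: "(real^'n^'m \<Rightarrow> real^'q) \<Rightarrow> nat \<Rightarrow> (real^'n^'m) set" where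
  "null_rank L k = {X. rank X \<le> k \<and> L X = 0}"

definition lift_set :: "((real^'m) \<times> (real^'n)) set \<Rightarrow> (real^'n^'m) set" where
  "lift_set K = {outer x y | x y. (x, y) \<in> K}"

definition diff_set :: "(real^'n^'m) set \<Rightarrow> (real^'n^'m) set" where
  "diff_set A = {X1 - X2 | X1 X2. X1 \<in> A \<and> X2 \<in> A}"

definition rank_min_solutions ::
  "(real^'m \<Rightarrow> real^'n \<Rightarrow> real^'q) \<Rightarrow> ((real^'m) \<times> (real^'n)) set \<Rightarrow> real^'q \<Rightarrow> (real^'n^'m) set" where
  "rank_min_solutions S K z =
     {W. W \<in> lift_set K \<and> lift_op S W = z \<and>
         (\<forall>W'. W' \<in> lift_set K \<and> lift_op S W' = z \<longrightarrow> rank W \<le> rank W')}"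

end

theory Submission
  imports Defs
begin

text \<open>Every x y^T is feasible, and two such matrices differ by a matrix of rank at most 2.
  As the lifted operator is linear and sends x y^T to S(x, y), the condition on the rank-2
  null set says exactly that it is injective on K'. Injectivity makes x y^T the only feasible
  point for z = S(x, y); conversely, if S(x, y) = S(x', y') then both observations have the same
  solution set, so uniqueness of the solutions forces x y^T = x' y'^T.\<close>

lemma linear_lift_op: "linear (lift_op S)"
  by (rule linearI)
     (simp_all add: lift_op_def vec_eq_iff distrib_left sum.distrib sum_distrib_left
                    mult.left_commute)

lemma lift_op_outer:
  assumes "bilinear S"
  shows "lift_op S (outer x y) = S x y"
proof -
  have ex: "x = (\<Sum>i\<in>UNIV. (x$i) *\<^sub>R axis i 1)"
    using basis_expansion[of x] by (simp add: scalar_mult_eq_scaleR)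
  have ey: "y = (\<Sum>k\<in>UNIV. (y$k) *\<^sub>R axis k 1)"
    using basis_expansion[of y] by (simp add: scalar_mult_eq_scaleR)
  have "S x y = (\<Sum>(i,k)\<in>UNIV \<times> UNIV. S ((x$i) *\<^sub>R axis i 1) ((y$k) *\<^sub>R axis k 1))"
    by (subst ex, subst ey, rule bilinear_sum[OF assms])
  also have "\<dots> = (\<Sum>(i,k)\<in>UNIV \<times> UNIV. (y$k * x$i) *\<^sub>R S (axis i 1) (axis k 1))"
    by (simp add: bilinear_lmul[OF assms] bilinear_rmul[OF assms])
  finally have "S x y = (\<Sum>i\<in>UNIV. \<Sum>k\<in>UNIV. (y$k * x$i) *\<^sub>R S (axis i 1) (axis k 1))"
    by (simp add: sum.cartesian_product)
  then show ?thesis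
    by (simp add: lift_op_def outer_def vec_eq_iff sum_component mult.commute mult.left_commute)
qed

lemma outer_mult_vector: "outer x y *v v = (y \<bullet> v) *\<^sub>R x"
proof -
  have "(\<Sum>j\<in>UNIV. x $ i * y $ j * v $ j) = x $ i * (y \<bullet> v)" for i
    by (simp add: inner_vec_def sum_distrib_left mult.assoc)
  then show ?thesis
    by (simp add: vec_eq_iff outer_def matrix_vector_mult_def mult.commute)
qed

lemma rank_outer_diff_le: "rank (outer x1 y1 - outer x2 y2) \<le> 2"
proof -
  have "range (\<lambda>v. (outer x1 y1 - outer x2 y2) *v v) \<subseteq> span {x1, x2}"
    by (clarsimp simp: matrix_vector_mult_diff_rdistrib outer_mult_vector)
       (intro span_diff span_mul span_base; simp)
  then have "dim (range (\<lambda>v. (outer x1 y1 - outer x2 y2) *v v)) \<le> card {x1, x2}"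
    by (intro dim_le_card) auto
  also have "\<dots> \<le> 2"
    by (simp add: card_insert_if)
  finally show ?thesis
    by (simp add: rank_dim_range)
qed

lemma null_rank_inter_diff_set_eq_zero_iff_inj_on:
  assumes "linear L" and "A \<noteq> {}"
    and "\<And>X1 X2. X1 \<in> A \<Longrightarrow> X2 \<in> A \<Longrightarrow> rank (X1 - X2) \<le> k"
  shows "null_rank L k \<inter> diff_set A = {0} \<longleftrightarrow> inj_on L A"
proof
  assume null: "null_rank L k \<inter> diff_set A = {0}"
  show "inj_on L A"
  proof (rule inj_onI)
    fix X1 X2 assume "X1 \<in> A" "X2 \<in> A" "L X1 = L X2"
    then have "X1 - X2 \<in> null_rank L k \<inter> diff_set A"
      using assms(3) linear_diff[OF assms(1)] by (auto simp: null_rank_def diff_set_def)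
    with null show "X1 = X2" by simp
  qed
next
  assume inj: "inj_on L A"
  have "X = 0" if "X \<in> null_rank L k" "X \<in> diff_set A" for X
    using that inj linear_diff[OF assms(1)]
    by (auto simp: null_rank_def diff_set_def dest: inj_onD)
  moreover have "0 \<in> null_rank L k"
    by (simp add: null_rank_def linear_0[OF assms(1)])
  moreover have "0 \<in> diff_set A"
    using assms(2) by (force simp: diff_set_def)
  ultimately show "null_rank L k \<inter> diff_set A = {0}" by blast
qed

lemma lift_set_eq_image: "lift_set K = (\<lambda>(x, y). outer x y) ` K"
  by (auto simp: lift_set_def)

lemma inj_on_lift_op_lift_set_iff:
  assumes "bilinear S"
  shows "inj_on (lift_op S) (lift_set K) \<longleftrightarrow>
         (\<forall>(x, y)\<in>K. \<forall>(x', y')\<in>K. S x y = S x' y' \<longrightarrow> outer x y = outer x' y')"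
  by (simp add: inj_on_def lift_set_eq_image lift_op_outer[OF assms] split_beta)

lemma rank_min_solutions_eq_singleton:
  assumes "bilinear S" and "(x, y) \<in> K"
    and unique: "\<forall>(x', y')\<in>K. S x' y' = S x y \<longrightarrow> outer x' y' = outer x y"
  shows "rank_min_solutions S K (S x y) = {outer x y}"
proof -
  have "W = outer x y" if "W \<in> lift_set K" and feasible: "lift_op S W = S x y" for W
  proof -
    obtain x' y' where "W = outer x' y'" "(x', y') \<in> K"
      using \<open>W \<in> lift_set K\<close> unfolding lift_set_def by blast
    with feasible unique show ?thesis
      by (auto simp: lift_op_outer[OF assms(1)])
  qed
  moreover have "outer x y \<in> lift_set K" "lift_op S (outer x y) = S x y"
    using assms(1,2) by (auto simp: lift_set_def lift_op_outer)
  ultimately show ?thesis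
    unfolding rank_min_solutions_def by blast
qed

lemma rank_min_solutions_unique_iff:
  assumes "bilinear S"
  shows "(\<forall>(x, y) \<in> K. rank_min_solutions S K (S x y) = {outer x y}) \<longleftrightarrow>
         (\<forall>(x, y)\<in>K. \<forall>(x', y')\<in>K. S x y = S x' y' \<longrightarrow> outer x y = outer x' y')"
proof
  assume unique: "\<forall>(x, y) \<in> K. rank_min_solutions S K (S x y) = {outer x y}"
  show "\<forall>(x, y)\<in>K. \<forall>(x', y')\<in>K. S x y = S x' y' \<longrightarrow> outer x y = outer x' y'"
  proof clarify
    fix x y x' y' assume "(x, y) \<in> K" "(x', y') \<in> K" and "S x y = S x' y'"
    then have "{outer x y} = rank_min_solutions S K (S x' y')"
      using unique by auto
    also have "\<dots> = {outer x' y'}"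
      using unique \<open>(x', y') \<in> K\<close> by auto
    finally show "outer x y = outer x' y'" by simp
  qed
next
  assume pairs: "\<forall>(x, y)\<in>K. \<forall>(x', y')\<in>K. S x y = S x' y' \<longrightarrow> outer x y = outer x' y'"
  show "\<forall>(x, y) \<in> K. rank_min_solutions S K (S x y) = {outer x y}"
  proof clarify
    fix x y assume "(x, y) \<in> K"
    with pairs show "rank_min_solutions S K (S x y) = {outer x y}"
      by (intro rank_min_solutions_eq_singleton[OF assms]) auto
  qed
qed

theorem proposition1:
  fixes S :: "real^'m \<Rightarrow> real^'n \<Rightarrow> real^'q"
    and K :: "((real^'m) \<times> (real^'n)) set"
  assumes "bilinear S"
    and "K \<noteq> {}"
  shows "(\<forall>(x, y) \<in> K. rank_min_solutions S K (S x y) = {outer x y})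
         \<longleftrightarrow> null_rank (lift_op S) 2 \<inter> diff_set (lift_set K) = {0}"
proof -
  have "(\<forall>(x, y) \<in> K. rank_min_solutions S K (S x y) = {outer x y}) \<longleftrightarrow>
        (\<forall>(x, y)\<in>K. \<forall>(x', y')\<in>K. S x y = S x' y' \<longrightarrow> outer x y = outer x' y')"
    by (rule rank_min_solutions_unique_iff[OF assms(1)])
  also have "\<dots> \<longleftrightarrow> inj_on (lift_op S) (lift_set K)"
    by (rule inj_on_lift_op_lift_set_iff[OF assms(1), symmetric])
  also have "\<dots> \<longleftrightarrow> null_rank (lift_op S) 2 \<inter> diff_set (lift_set K) = {0}"
    using assms(2) rank_outer_diff_le
    by (intro null_rank_inter_diff_set_eq_zero_iff_inj_on[symmetric] linear_lift_op)
       (auto simp: lift_set_def)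
  finally show ?thesis .
qed

end
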